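(* Let $\phi=(\phi_i)_{i\ge1}$ and $\psi=(\psi_i)_{i\ge1}$ be sequences of real numbers with $\psi_i>-2$ for all $i\ge1$, and define $\mathcal{H}_0^{\phi,\psi}=1$ and, for $n\ge0$, $$\mathcal{H}_{n+1}^{\phi,\psi}(x)=2x\mathcal{H}_n^{\phi,\psi}(x)-(\mathcal{H}_n^{\phi,\psi})'(x)+(\phi_{n+1}+x\psi_{n+1})\mathcal{H}_n^{\phi,\psi}(x).$$ Assume that for some integer $n\ge2$ we have $\phi_{n-1}=\phi_n$ and $\psi_{n-1}=\psi_n$. Then $$\big(\mathcal{H}_{n-1}^{\phi,\psi}(x)\big)^2-\mathcal{H}_n^{\phi,\psi}(x)\mathcal{H}_{n-2}^{\phi,\psi}(x)>0\quad\text{for all }x\in\mathbb{R}.$$ *)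

theory Defs
  imports "HOL-Computational_Algebra.Polynomial"
begin

text \<open>Generalized Hermite-type polynomials: H_0 = 1 and
  H_(n+1) = 2x H_n - H_n' + (phi_(n+1) + x psi_(n+1)) H_n.
  The sequences phi, psi are indexed from 1 (value at index 0 is irrelevant).\<close>

fun genH :: "(nat \<Rightarrow> real) \<Rightarrow> (nat \<Rightarrow> real) \<Rightarrow> nat \<Rightarrow> real poly" where
  "genH phi psi 0 = 1"
| "genH phi psi (Suc n) =
     [:0, 2:] * genH phi psi n - pderiv (genH phi psi n)
     + [:phi (Suc n), psi (Suc n):] * genH phi psi n"

end

theory Submission
  imports Defs
begin

(* The recursion reads H_(k+1) = L_(k+1) H_k - H_k' with L_k = phi_k + (2 + psi_k) x of positive
   slope. A step f |-> L f - f' with such an L preserves having only real simple roots: at the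
   roots of f the new polynomial equals -f', whose signs alternate, and together with its signs
   at +-infinity this forces one more root than f has. When L_(n-1) = L_n, a direct computation
   with P = H_(n-2) gives
     H_(n-1)^2 - H_n H_(n-2) = P'^2 - P P'' + (2 + psi_n) P^2,
   which is positive: P'^2 >= P P'' is Laguerre's inequality for real-rooted P, and P and P'
   have no common zero. *)

(* Having as many distinct real roots as its degree forces all roots of p to be real and simple. *)
definition real_simple_roots :: "real poly \<Rightarrow> bool" where
  "real_simple_roots p \<longleftrightarrow> p \<noteq> 0 \<and> card {x. poly p x = 0} = degree p"

lemma real_simple_roots_minus_iff [simp]: "real_simple_roots (-p) \<longleftrightarrow> real_simple_roots p"
  by (simp add: real_simple_roots_def)

lemma prod_linear_factors_dvd:
  fixes p :: "'a::idom poly"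
  assumes "finite S" and "\<forall>x\<in>S. poly p x = 0"
  shows "(\<Prod>x\<in>S. [:-x, 1:]) dvd p"
  using assms
proof (induction S arbitrary: p rule: finite_induct)
  case empty
  then show ?case by simp
next
  case (insert x S)
  then obtain q where q: "p = [:-x, 1:] * q"
    using poly_eq_0_iff_dvd by blast
  with insert have "\<forall>y\<in>S. poly q y = 0"
    by auto
  with insert.IH have "(\<Prod>x\<in>S. [:-x, 1:]) dvd q" .
  then show ?case
    using insert.hyps q by (simp del: mult_pCons_left)
qed

lemma card_roots_eq_degree_imp_factorization:
  fixes p :: "'a::idom poly"
  assumes "p \<noteq> 0" and "card {x. poly p x = 0} = degree p"
  shows "p = smult (lead_coeff p) (\<Prod>x | poly p x = 0. [:-x, 1:])"
proof -
  define P where "P = (\<Prod>x | poly p x = 0. [:-x, 1:])"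
  have fin: "finite {x. poly p x = 0}"
    using poly_roots_finite[OF assms(1)] .
  have "P dvd p"
    unfolding P_def using fin by (rule prod_linear_factors_dvd) simp
  then obtain k where k: "p = P * k" ..
  have "P \<noteq> 0"
    using fin by (simp add: P_def)
  moreover have "k \<noteq> 0"
    using k assms(1) by auto
  moreover have "degree P = degree p"
    using fin assms(2) by (simp add: P_def degree_prod_eq_sum_degree)
  ultimately have "degree k = 0"
    using k by (simp add: degree_mult_eq)
  then obtain c where "k = [:c:]"
    by (rule degree_eq_zeroE)
  with k have "p = smult c P"
    by simp
  moreover have "lead_coeff P = 1"
    by (simp add: P_def lead_coeff_prod)
  ultimately show ?thesis
    unfolding P_def[symmetric] by simp
qed

lemma poly_pderiv_prod_linear_factors_at_root:
  fixes S :: "'a::idom set"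
  assumes "finite S" and "r \<in> S"
  shows "poly (pderiv (\<Prod>x\<in>S. [:-x, 1:])) r = (\<Prod>s\<in>S - {r}. r - s)"
proof -
  have "(\<Prod>x\<in>S. [:-x, 1:]) = [:-r, 1:] * (\<Prod>x\<in>S - {r}. [:-x, 1:])"
    using assms by (simp add: prod.remove del: mult_pCons_left)
  then show ?thesis
    by (simp add: pderiv_mult pderiv_pCons poly_prod del: mult_pCons_left)
qed

lemma sign_prod_diff:
  fixes S :: "'a::linordered_idom set"
  assumes "finite S"
  shows "(-1) ^ card {s\<in>S. r < s} * (\<Prod>s\<in>S - {r}. r - s) > 0"
proof -
  define L where "L = {s\<in>S. s < r}"
  define U where "U = {s\<in>S. r < s}"
  have "S - {r} = L \<union> U" and "L \<inter> U = {}" and "finite L" "finite U"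
    using assms by (auto simp: L_def U_def)
  then have "(\<Prod>s\<in>S - {r}. r - s) = (\<Prod>s\<in>L. r - s) * (\<Prod>s\<in>U. r - s)"
    by (simp add: prod.union_disjoint)
  also have "(\<Prod>s\<in>U. r - s) = (\<Prod>s\<in>U. - 1 * (s - r))"
    by simp
  also have "\<dots> = (-1) ^ card U * (\<Prod>s\<in>U. s - r)"
    by (simp only: prod.distrib prod_constant)
  finally have "(-1) ^ card U * (\<Prod>s\<in>S - {r}. r - s)
      = ((-1) ^ card U * (-1) ^ card U) * ((\<Prod>s\<in>L. r - s) * (\<Prod>s\<in>U. s - r))"
    by (simp add: algebra_simps)
  also have "\<dots> = (\<Prod>s\<in>L. r - s) * (\<Prod>s\<in>U. s - r)"
    by (simp flip: power_add)
  also have "\<dots> > 0"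
    by (intro mult_pos_pos prod_pos) (auto simp: L_def U_def)
  finally show ?thesis
    by (simp add: U_def)
qed

lemma real_simple_roots_factorization:
  assumes "real_simple_roots p"
  shows "p = smult (lead_coeff p) (\<Prod>x | poly p x = 0. [:-x, 1:])"
  using assms card_roots_eq_degree_imp_factorization by (auto simp: real_simple_roots_def)

lemma real_simple_roots_poly_pderiv_at_root:
  assumes "real_simple_roots p" and "poly p r = 0"
  shows "poly (pderiv p) r = lead_coeff p * (\<Prod>s\<in>{x. poly p x = 0} - {r}. r - s)"
proof -
  have "finite {x. poly p x = 0}"
    using assms(1) poly_roots_finite by (auto simp: real_simple_roots_def)
  then show ?thesis
    using assms by (subst real_simple_roots_factorization[OF assms(1)])
      (simp add: pderiv_smult poly_pderiv_prod_linear_factors_at_root)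
qed

lemma real_simple_roots_sign_pderiv_at_root:
  assumes "real_simple_roots p" and "lead_coeff p > 0" and "poly p r = 0"
  shows "(-1) ^ card {s. poly p s = 0 \<and> r < s} * poly (pderiv p) r > 0"
proof -
  let ?S = "{x. poly p x = 0}"
  have "finite ?S"
    using assms(1) poly_roots_finite by (auto simp: real_simple_roots_def)
  then have "(-1) ^ card {s\<in>?S. r < s} * (\<Prod>s\<in>?S - {r}. r - s) > 0"
    by (rule sign_prod_diff)
  then show ?thesis
    using assms(2) real_simple_roots_poly_pderiv_at_root[OF assms(1,3)]
    by (simp add: mult.left_commute[of _ "lead_coeff p"])
qed

lemma real_simple_roots_imp_rsquarefree:
  assumes "real_simple_roots p"
  shows "rsquarefree p"
  unfolding rsquarefree_roots
proof (intro allI notI)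
  fix r
  assume r: "poly p r = 0 \<and> poly (pderiv p) r = 0"
  let ?S = "{x. poly p x = 0}"
  have "finite ?S" and "p \<noteq> 0"
    using assms poly_roots_finite by (auto simp: real_simple_roots_def)
  moreover have "(-1) ^ card {s\<in>?S. r < s} * (\<Prod>s\<in>?S - {r}. r - s) > 0"
    using \<open>finite ?S\<close> by (rule sign_prod_diff)
  ultimately have "lead_coeff p * (\<Prod>s\<in>?S - {r}. r - s) \<noteq> 0"
    by auto
  with r show False
    using real_simple_roots_poly_pderiv_at_root[OF assms, of r] by simp
qed

lemma laguerre_inequality_prod_mset:
  fixes M :: "real multiset"
  shows "poly (\<Prod>r\<in>#M. [:-r, 1:]) x * poly (pderiv (pderiv (\<Prod>r\<in>#M. [:-r, 1:]))) x
      \<le> poly (pderiv (\<Prod>r\<in>#M. [:-r, 1:])) x ^ 2"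
proof (induction M)
  case empty
  then show ?case by simp
next
  case (add r M)
  define h where "h = (\<Prod>r\<in>#M. [:-r, 1:])"
  have prod_eq: "(\<Prod>r\<in>#add_mset r M. [:-r, 1:]) = [:-r, 1:] * h"
    by (simp add: h_def del: mult_pCons_left)
  have h': "pderiv ([:-r, 1:] * h) = h + [:-r, 1:] * pderiv h"
    by (simp add: pderiv_mult pderiv_pCons del: mult_pCons_left)
  have h'': "pderiv (pderiv ([:-r, 1:] * h)) = 2 * pderiv h + [:-r, 1:] * pderiv (pderiv h)"
    unfolding h' by (simp add: pderiv_mult pderiv_add pderiv_pCons del: mult_pCons_left)
  have "poly (pderiv ([:-r, 1:] * h)) x ^ 2
        - poly ([:-r, 1:] * h) x * poly (pderiv (pderiv ([:-r, 1:] * h))) x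
      = poly h x ^ 2
        + (x - r) ^ 2 * (poly (pderiv h) x ^ 2 - poly h x * poly (pderiv (pderiv h)) x)"
    unfolding h'' unfolding h' by (simp add: algebra_simps power2_eq_square)
  moreover have "0 \<le> (x - r) ^ 2 * (poly (pderiv h) x ^ 2 - poly h x * poly (pderiv (pderiv h)) x)"
    using add.IH by (simp add: h_def)
  ultimately show ?case
    unfolding prod_eq using zero_le_power2[of "poly h x"] by linarith
qed

lemma real_simple_roots_laguerre_inequality:
  assumes "real_simple_roots p"
  shows "poly p x * poly (pderiv (pderiv p)) x \<le> poly (pderiv p) x ^ 2"
proof -
  define q where "q = (\<Prod>r | poly p r = 0. [:-r, 1:])"
  have p: "p = smult (lead_coeff p) q"
    unfolding q_def by (rule real_simple_roots_factorization[OF assms])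
  have "poly q x * poly (pderiv (pderiv q)) x \<le> poly (pderiv q) x ^ 2"
    using laguerre_inequality_prod_mset[of "mset_set {r. poly p r = 0}" x]
    by (simp add: q_def prod_unfold_prod_mset)
  then have "lead_coeff p ^ 2 * (poly q x * poly (pderiv (pderiv q)) x)
      \<le> lead_coeff p ^ 2 * poly (pderiv q) x ^ 2"
    by (rule mult_left_mono) simp
  then show ?thesis
    by (subst (1 2 3) p) (simp add: pderiv_smult algebra_simps power2_eq_square)
qed

lemma eventually_poly_pos_at_top:
  fixes p :: "real poly"
  assumes "lead_coeff p > 0"
  shows "eventually (\<lambda>x. poly p x > 0) at_top"
proof -
  obtain n where "\<forall>x\<ge>n. lead_coeff p \<le> poly p x"
    using poly_pinfty_gt_lc[OF assms] ..
  with assms show ?thesis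
    unfolding eventually_at_top_linorder by (meson less_le_trans)
qed

lemma eventually_poly_sign_at_bot:
  fixes p :: "real poly"
  assumes "lead_coeff p > 0"
  shows "eventually (\<lambda>x. (-1) ^ degree p * poly p x > 0) at_bot"
proof -
  define q where "q = smult ((-1) ^ degree p) (p \<circ>\<^sub>p [:0, -1:])"
  have "lead_coeff q = lead_coeff p"
    by (simp add: q_def lead_coeff_comp flip: power_mult_distrib)
  with assms have "eventually (\<lambda>x. poly q x > 0) at_top"
    by (simp add: eventually_poly_pos_at_top)
  then show ?thesis
    unfolding at_bot_mirror eventually_filtermap by (simp add: q_def poly_pcompose)
qed

lemma Suc_card_roots_below_le_if_sign_change:
  fixes g :: "real poly"
  assumes "g \<noteq> 0" and "m < b" and "poly g m < 0" and "poly g b > 0"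
  shows "Suc (card {z. poly g z = 0 \<and> z < m}) \<le> card {z. poly g z = 0 \<and> z < b}"
proof -
  obtain z where z: "m < z" "z < b" "poly g z = 0"
    using poly_IVT_pos[OF assms(2-4)] by blast
  have "Suc (card {z. poly g z = 0 \<and> z < m}) = card (insert z {z. poly g z = 0 \<and> z < m})"
    using poly_roots_finite[OF assms(1)] z(1) by simp
  also have "\<dots> \<le> card {z. poly g z = 0 \<and> z < b}"
    using poly_roots_finite[OF assms(1)] z assms(2) by (intro card_mono) auto
  finally show ?thesis .
qed

lemma card_le_Suc_card_roots_below_Max:
  fixes g :: "real poly"
  assumes "finite A" and "g \<noteq> 0"
    and "\<forall>a\<in>A. (-1) ^ card {b\<in>A. a < b} * poly g a > 0"
  shows "card A \<le> Suc (card {z. poly g z = 0 \<and> z < Max A})"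
  using assms
proof (induction A arbitrary: g rule: finite_linorder_max_induct)
  case empty
  then show ?case by simp
next
  case (insert b A)
  show ?case
  proof (cases "A = {}")
    case True
    then show ?thesis by simp
  next
    case False
    define m where "m = Max A"
    have "m \<in> A" and "m < b" and "b \<notin> A"
      using insert.hyps False by (auto simp: m_def)
    have Max_eq: "Max (insert b A) = b"
      using insert.hyps(1) False \<open>m < b\<close> by (simp add: m_def)
    \<comment> \<open>Removing the maximum b flips every remaining sign, so the hypothesis holds for -g on A.\<close>
    have "\<forall>a\<in>A. (-1) ^ card {c\<in>A. a < c} * poly (-g) a > 0"
    proof
      fix a
      assume "a \<in> A"
      then have "{c\<in>insert b A. a < c} = insert b {c\<in>A. a < c}"
        using insert.hyps(2) by auto
      then have "card {c\<in>insert b A. a < c} = Suc (card {c\<in>A. a < c})"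
        using insert.hyps(1) \<open>b \<notin> A\<close> by simp
      then show "(-1) ^ card {c\<in>A. a < c} * poly (-g) a > 0"
        using insert.prems(2) \<open>a \<in> A\<close> by auto
    qed
    then have IH: "card A \<le> Suc (card {z. poly g z = 0 \<and> z < m})"
      using insert.IH[of "-g"] insert.prems(1) by (simp add: m_def)
    have above_b: "{c\<in>insert b A. b < c} = {}"
      using insert.hyps(2) by auto
    have "(-1) ^ card {c\<in>insert b A. b < c} * poly g b > 0"
      using insert.prems(2) by blast
    then have "poly g b > 0"
      unfolding above_b by simp
    have above_m: "{c\<in>insert b A. m < c} = {b}"
      using insert.hyps(1) \<open>m < b\<close> by (auto simp: m_def dest: Max_ge[of A] leD)
    have "(-1) ^ card {c\<in>insert b A. m < c} * poly g m > 0"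
      using insert.prems(2) \<open>m \<in> A\<close> by blast
    then have "poly g m < 0"
      unfolding above_m by (simp add: mult_less_0_iff)
    with \<open>m < b\<close> \<open>poly g b > 0\<close> insert.prems(1)
    have "Suc (card {z. poly g z = 0 \<and> z < m}) \<le> card {z. poly g z = 0 \<and> z < b}"
      by (intro Suc_card_roots_below_le_if_sign_change)
    with IH show ?thesis
      using insert.hyps(1) \<open>b \<notin> A\<close> by (simp add: Max_eq)
  qed
qed

lemma degree_linear_mult_minus_pderiv:
  fixes f :: "'a::idom poly"
  assumes "c \<noteq> 0" and "f \<noteq> 0"
  shows "degree ([:a, c:] * f - pderiv f) = Suc (degree f)"
    and "lead_coeff ([:a, c:] * f - pderiv f) = c * lead_coeff f"
proof -
  let ?g = "[:a, c:] * f - pderiv f"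
  have coeff_g: "coeff ?g (Suc (degree f)) = c * lead_coeff f"
    by (simp add: coeff_pderiv coeff_eq_0)
  have "degree ([:a, c:] * f) \<le> Suc (degree f)"
    using degree_mult_le[of "[:a, c:]" f] assms(1) by (simp del: mult_pCons_left)
  moreover have "degree (pderiv f) \<le> Suc (degree f)"
    by (rule degree_le) (simp add: coeff_pderiv coeff_eq_0)
  ultimately have "degree ?g \<le> Suc (degree f)"
    by (rule degree_diff_le)
  moreover have "Suc (degree f) \<le> degree ?g"
    using coeff_g assms by (intro le_degree) simp
  ultimately show deg: "degree ?g = Suc (degree f)"
    by (rule antisym)
  show "lead_coeff ?g = c * lead_coeff f"
    unfolding deg by (rule coeff_g)
qed

lemma Suc_card_le_card_roots_if_alternating:
  fixes g :: "real poly"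
  assumes "finite S" and "lead_coeff g > 0" and "degree g = Suc (card S)"
    and "\<forall>r\<in>S. (-1) ^ card {s\<in>S. r < s} * poly g r < 0"
  shows "Suc (card S) \<le> card {z. poly g z = 0}"
proof -
  have "g \<noteq> 0"
    using assms(2) by auto
  have "eventually (\<lambda>x. poly g x > 0 \<and> (\<forall>r\<in>S. r < x)) at_top"
    using eventually_poly_pos_at_top[OF assms(2)] assms(1)
    by (simp add: eventually_conj eventually_ball_finite)
  then obtain T where T: "poly g T > 0" "\<forall>r\<in>S. r < T"
    using eventually_happens' by force
  have "eventually (\<lambda>x. (-1) ^ Suc (card S) * poly g x > 0 \<and> (\<forall>r\<in>S. x < r) \<and> x < T) at_bot"
    using eventually_poly_sign_at_bot[OF assms(2)] assms(1,3)
    by (simp add: eventually_conj eventually_ball_finite)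
  then obtain s where s: "(-1) ^ Suc (card S) * poly g s > 0" "\<forall>r\<in>S. s < r" "s < T"
    using eventually_happens' by force
  define A where "A = insert s (insert T S)"
  have "T \<notin> S" and "s \<notin> insert T S"
    using s T by auto
  then have "finite A" and card_A: "card A = Suc (Suc (card S))"
    using assms(1) by (simp_all add: A_def)
  have "\<forall>x\<in>A. (-1) ^ card {b\<in>A. x < b} * poly g x > 0"
  proof
    fix x
    assume "x \<in> A"
    then consider "x = s" | "x = T" | "x \<in> S"
      by (auto simp: A_def)
    then show "(-1) ^ card {b\<in>A. x < b} * poly g x > 0"
    proof cases
      case 1
      then have "{b\<in>A. x < b} = insert T S"
        using s by (auto simp: A_def)
      with 1 show ?thesis
        using s \<open>T \<notin> S\<close> assms(1) by simp
    next
      case 2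
      then have above: "{b\<in>A. x < b} = {}"
        using s T by (auto simp: A_def)
      show ?thesis
        unfolding above using 2 T by simp
    next
      case 3
      then have "{b\<in>A. x < b} = insert T {b\<in>S. x < b}"
        using s T by (auto simp: A_def)
      then have "card {b\<in>A. x < b} = Suc (card {b\<in>S. x < b})"
        using assms(1) \<open>T \<notin> S\<close> by simp
      with 3 assms(4) show ?thesis
        by simp
    qed
  qed
  then have "card A \<le> Suc (card {z. poly g z = 0 \<and> z < Max A})"
    using card_le_Suc_card_roots_below_Max \<open>finite A\<close> \<open>g \<noteq> 0\<close> by blast
  also have "card {z. poly g z = 0 \<and> z < Max A} \<le> card {z. poly g z = 0}"
    using poly_roots_finite[OF \<open>g \<noteq> 0\<close>] by (intro card_mono) auto
  finally show ?thesis
    using card_A by simp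
qed

lemma real_simple_roots_linear_mult_minus_pderiv_pos_lead:
  assumes f: "real_simple_roots f" and "lead_coeff f > 0" and "c > 0"
  shows "real_simple_roots ([:a, c:] * f - pderiv f)"
proof -
  define g where "g = [:a, c:] * f - pderiv f"
  define S where "S = {x. poly f x = 0}"
  have "f \<noteq> 0" and "finite S" and card_S: "card S = degree f"
    using f poly_roots_finite by (auto simp: real_simple_roots_def S_def)
  have deg_g: "degree g = Suc (card S)" and "lead_coeff g > 0"
    using degree_linear_mult_minus_pderiv[of c f a] assms \<open>f \<noteq> 0\<close> card_S
    by (simp_all add: g_def)
  have "\<forall>r\<in>S. (-1) ^ card {s\<in>S. r < s} * poly g r < 0"
  proof
    fix r
    assume "r \<in> S"
    then have "poly g r = - poly (pderiv f) r"
      by (simp add: g_def S_def)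
    with \<open>r \<in> S\<close> show "(-1) ^ card {s\<in>S. r < s} * poly g r < 0"
      using real_simple_roots_sign_pderiv_at_root[OF assms(1,2), of r] by (simp add: S_def)
  qed
  with \<open>finite S\<close> \<open>lead_coeff g > 0\<close> deg_g
  have "degree g \<le> card {z. poly g z = 0}"
    using Suc_card_le_card_roots_if_alternating by simp
  moreover have "g \<noteq> 0"
    using \<open>lead_coeff g > 0\<close> by auto
  ultimately show ?thesis
    using card_poly_roots_bound[of g] by (simp add: real_simple_roots_def g_def)
qed

lemma real_simple_roots_linear_mult_minus_pderiv:
  assumes "real_simple_roots f" and "c > 0"
  shows "real_simple_roots ([:a, c:] * f - pderiv f)"
proof (cases "lead_coeff f > 0")
  case True
  with assms show ?thesis
    by (intro real_simple_roots_linear_mult_minus_pderiv_pos_lead)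
next
  case False
  have "lead_coeff f \<noteq> 0"
    using assms(1) by (simp add: real_simple_roots_def)
  with False have "lead_coeff f < 0"
    by linarith
  then have "lead_coeff (-f) > 0"
    by simp
  then have "real_simple_roots ([:a, c:] * (-f) - pderiv (-f))"
    using assms by (intro real_simple_roots_linear_mult_minus_pderiv_pos_lead) simp_all
  moreover have "[:a, c:] * (-f) - pderiv (-f) = - ([:a, c:] * f - pderiv f)"
    by (simp add: pderiv_minus)
  ultimately show ?thesis
    by (metis real_simple_roots_minus_iff)
qed

lemma genH_Suc_eq:
  "genH phi psi (Suc m)
    = [:phi (Suc m), 2 + psi (Suc m):] * genH phi psi m - pderiv (genH phi psi m)"
proof -
  have "[:phi (Suc m), 2 + psi (Suc m):] = [:0, 2:] + [:phi (Suc m), psi (Suc m):]"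
    by simp
  then show ?thesis
    by (simp add: algebra_simps smult_add_left del: mult_pCons_left)
qed

lemma real_simple_roots_genH:
  assumes "\<forall>i\<ge>1. psi i > -2"
  shows "real_simple_roots (genH phi psi m)"
proof (induction m)
  case 0
  then show ?case
    by (simp add: real_simple_roots_def)
next
  case (Suc m)
  have "2 + psi (Suc m) > 0"
    using assms[rule_format, of "Suc m"] by simp
  with Suc.IH show ?case
    unfolding genH_Suc_eq by (rule real_simple_roots_linear_mult_minus_pderiv)
qed

lemma turan_expression_linear_mult_minus_pderiv:
  fixes P :: "'a::idom poly" and a c :: 'a
  defines "Q \<equiv> [:a, c:] * P - pderiv P"
  defines "R \<equiv> [:a, c:] * Q - pderiv Q"
  shows "poly Q x ^ 2 - poly R x * poly P x
       = poly (pderiv P) x ^ 2 - poly P x * poly (pderiv (pderiv P)) x + c * poly P x ^ 2"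
proof -
  have pderiv_Q: "pderiv Q = [:a, c:] * pderiv P + smult c P - pderiv (pderiv P)"
    by (simp add: Q_def pderiv_add pderiv_smult pderiv_diff pderiv_pCons algebra_simps)
  show ?thesis
    unfolding R_def pderiv_Q unfolding Q_def by (simp add: algebra_simps power2_eq_square)
qed

lemma turan_inequality_linear_mult_minus_pderiv:
  fixes P :: "real poly" and a c :: real
  assumes "real_simple_roots P" and "c > 0"
  defines "Q \<equiv> [:a, c:] * P - pderiv P"
  defines "R \<equiv> [:a, c:] * Q - pderiv Q"
  shows "poly Q x ^ 2 - poly R x * poly P x > 0"
proof -
  have laguerre: "poly P x * poly (pderiv (pderiv P)) x \<le> poly (pderiv P) x ^ 2"
    using assms(1) by (rule real_simple_roots_laguerre_inequality)
  have "poly (pderiv P) x ^ 2 - poly P x * poly (pderiv (pderiv P)) x + c * poly P x ^ 2 > 0"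
  proof (cases "poly P x = 0")
    case True
    then have "poly (pderiv P) x \<noteq> 0"
      using real_simple_roots_imp_rsquarefree[OF assms(1)] by (auto simp: rsquarefree_roots)
    with True show ?thesis
      by simp
  next
    case False
    with assms(2) have "c * poly P x ^ 2 > 0"
      by simp
    with laguerre show ?thesis
      by linarith
  qed
  then show ?thesis
    unfolding Q_def R_def turan_expression_linear_mult_minus_pderiv .
qed

theorem theorem3p4:
  fixes phi psi :: "nat \<Rightarrow> real" and n :: nat
  assumes "\<forall>i\<ge>1. psi i > -2"
    and "n \<ge> 2"
    and "phi (n - 1) = phi n" and "psi (n - 1) = psi n"
  shows "\<forall>x::real. (poly (genH phi psi (n - 1)) x)^2
                    - poly (genH phi psi n) x * poly (genH phi psi (n - 2)) x > 0"
proof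
  fix x :: real
  obtain m where n: "n = Suc (Suc m)"
    using assms(2) by (metis add_2_eq_Suc le_add_diff_inverse)
  define P where "P = genH phi psi m"
  have "2 + psi n > 0"
    using assms(1)[rule_format, of n] n by simp
  have "genH phi psi (n - 1) = [:phi n, 2 + psi n:] * P - pderiv P"
    using assms(3,4) unfolding n P_def by (simp only: diff_Suc_1 genH_Suc_eq)
  moreover have "genH phi psi n
      = [:phi n, 2 + psi n:] * genH phi psi (n - 1) - pderiv (genH phi psi (n - 1))"
    unfolding n by (simp only: diff_Suc_1 genH_Suc_eq)
  moreover have "genH phi psi (n - 2) = P"
    by (simp add: n P_def)
  ultimately show "(poly (genH phi psi (n - 1)) x)^2
                    - poly (genH phi psi n) x * poly (genH phi psi (n - 2)) x > 0"
    using turan_inequality_linear_mult_minus_pderiv[OF real_simple_roots_genH[OF assms(1)]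
        \<open>2 + psi n > 0\<close>, where a = "phi n" and x = x]
    by (simp only: P_def)
qed

end
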